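(* For a prime $N\ge3$, \[ \frac1{N-1}\sum_{w=1}^{N-1}\frac1{N^2}\sum_{h=1}^{N-1}\frac{\cot^2(\pi hw/N)}{h^2}=\frac{N-2}{3N^2}H_{N-1}(2)\le\frac{\pi^2}{18N}. \]
   Context: $H_n(a)=\sum_{h=1}^n h^{-a}$ denotes the harmonic number of order $a$. *)

theory Defs
  imports "HOL-Analysis.Analysis"
begin

definition harm_ord :: "nat \<Rightarrow> real \<Rightarrow> real" where
  "harm_ord n a = (\<Sum>h=1..n. real h powr (- a))"

end

theory Submission
  imports Defs
begin

text \<open>For h prime to N the numbers z = exp(2 pi i h w / N), 1 \<le> w < N, run through the nontrivial
  N-th roots of unity, and cot(pi h w / N) = i (z + 1) / (z - 1). Writing
  1 / (z - 1) = (\<Sum>j<N. j z^j) / N and using that every nontrivial power sum of these roots is -1,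
  the sums of 1 / (z - 1) and of its square are elementary, which gives
  \<Sum>w cot^2(pi h w / N) = (N - 1)(N - 2) / 3 independently of h. Summing against 1 / h^2 produces
  the harmonic number H_{N-1}(2), and H_{N-1}(2) \<le> pi^2 / 6 gives the bound.\<close>

lemma sum_lessThan_of_nat:
  "(\<Sum>j<n. of_nat j :: 'a::field_char_0) = of_nat n * (of_nat n - 1) / 2"
  by (induction n) (simp_all add: field_simps)

lemma sum_lessThan_squares:
  "(\<Sum>j<n. of_nat j ^ 2 :: 'a::field_char_0) = of_nat n * (of_nat n - 1) * (2 * of_nat n - 1) / 6"
  by (induction n) (simp_all add: field_simps power2_eq_square)

lemma sum_power_root_of_unity:
  fixes \<zeta> :: "'a::field"
  assumes "\<zeta> ^ n = 1" "\<zeta> \<noteq> 1" "n \<ge> 1"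
  shows "(\<Sum>w=1..n-1. \<zeta> ^ w) = -1"
proof -
  have "(\<Sum>w<n. \<zeta> ^ w) = 0" using assms by (simp add: sum_gp_strict)
  moreover have "{..<n} = insert 0 {1..n-1}" using assms by auto
  ultimately show ?thesis by (simp add: eq_neg_iff_add_eq_0 add.commute)
qed

lemma inverse_root_of_unity_minus_one:
  fixes \<zeta> :: "'a::field_char_0"
  assumes "\<zeta> ^ n = 1" "\<zeta> \<noteq> 1" "n \<ge> 1"
  shows "1 / (\<zeta> - 1) = (\<Sum>j<n. of_nat j * \<zeta> ^ j) / of_nat n"
proof -
  have telescope: "(\<zeta> - 1) * (\<Sum>j<m. of_nat j * \<zeta> ^ j) = of_nat m * \<zeta> ^ m - \<zeta> * (\<Sum>j<m. \<zeta> ^ j)" for m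
    by (induction m) (auto simp: algebra_simps)
  have "(\<Sum>j<n. \<zeta> ^ j) = 0" using assms by (simp add: sum_gp_strict)
  then have "(\<zeta> - 1) * (\<Sum>j<n. of_nat j * \<zeta> ^ j) = of_nat n"
    using telescope[of n] assms by simp
  then show ?thesis using assms by (simp add: field_simps)
qed

lemma power_div_minus_one:
  fixes \<zeta> :: "'a::field"
  assumes "\<zeta> \<noteq> 1"
  shows "\<zeta> ^ j / (\<zeta> - 1) = (\<Sum>m<j. \<zeta> ^ m) + 1 / (\<zeta> - 1)"
proof -
  have "1 - \<zeta> \<noteq> 0" "\<zeta> - 1 \<noteq> 0" using assms by auto
  then show ?thesis using assms by (simp add: sum_gp_strict field_simps)
qed

context
  fixes N :: nat and z :: "nat \<Rightarrow> 'a::field_char_0"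
  assumes N_ge_2: "N \<ge> 2"
    and z_neq_1: "\<And>w. w \<in> {1..N-1} \<Longrightarrow> z w \<noteq> 1"
    and z_root: "\<And>w. w \<in> {1..N-1} \<Longrightarrow> z w ^ N = 1"
    and z_power_sum: "\<And>m. 1 \<le> m \<Longrightarrow> m < N \<Longrightarrow> (\<Sum>w=1..N-1. z w ^ m) = -1"
begin

lemma sum_inverse_minus_one: "(\<Sum>w=1..N-1. 1 / (z w - 1)) = - (of_nat N - 1) / 2"
proof -
  have index_weighted: "of_nat j * (\<Sum>w=1..N-1. z w ^ j) = - of_nat j" if "j < N" for j
    using z_power_sum[of j] that by (cases "j = 0") auto
  have "(\<Sum>w=1..N-1. 1 / (z w - 1)) = (\<Sum>w=1..N-1. (\<Sum>j<N. of_nat j * z w ^ j) / of_nat N)"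
    using N_ge_2 by (intro sum.cong) (auto simp: inverse_root_of_unity_minus_one z_neq_1 z_root)
  also have "\<dots> = (\<Sum>w=1..N-1. \<Sum>j<N. of_nat j * z w ^ j) / of_nat N"
    by (rule sum_divide_distrib[symmetric])
  also have "(\<Sum>w=1..N-1. \<Sum>j<N. of_nat j * z w ^ j) = (\<Sum>j<N. of_nat j * (\<Sum>w=1..N-1. z w ^ j))"
    by (subst sum.swap) (simp add: sum_distrib_left)
  also have "\<dots> = (\<Sum>j<N. - of_nat j)"
    by (rule sum.cong[OF refl], rule index_weighted) simp
  also have "\<dots> = - (\<Sum>j<N. of_nat j)"
    by (rule sum_negf)
  also have "- (\<Sum>j<N. of_nat j) / of_nat N = - (of_nat N - 1) / (2 :: 'a)"
    unfolding sum_lessThan_of_nat using N_ge_2 by (simp add: field_simps)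
  finally show ?thesis .
qed

lemma sum_power_div_minus_one:
  assumes "1 \<le> j" "j < N"
  shows "(\<Sum>w=1..N-1. z w ^ j / (z w - 1)) = of_nat N - of_nat j - (of_nat N - 1) / 2"
proof -
  have partial: "(\<Sum>m<j. \<Sum>w=1..N-1. z w ^ m) = of_nat N - of_nat j"
    using assms
  proof (induction j)
    case (Suc j)
    show ?case
    proof (cases "j = 0")
      case True
      then show ?thesis using N_ge_2 by (simp add: of_nat_diff)
    next
      case False
      then show ?thesis using Suc z_power_sum[of j] by simp
    qed
  qed simp
  have "(\<Sum>w=1..N-1. z w ^ j / (z w - 1)) = (\<Sum>w=1..N-1. (\<Sum>m<j. z w ^ m) + 1 / (z w - 1))"
    by (rule sum.cong) (auto simp: power_div_minus_one z_neq_1)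
  also have "\<dots> = (\<Sum>m<j. \<Sum>w=1..N-1. z w ^ m) + (\<Sum>w=1..N-1. 1 / (z w - 1))"
    by (simp add: sum.distrib) (rule sum.swap)
  finally show ?thesis unfolding partial sum_inverse_minus_one by (simp add: field_simps)
qed

lemma sum_inverse_minus_one_squared:
  "(\<Sum>w=1..N-1. (1 / (z w - 1)) ^ 2) = (of_nat N - 1) * (5 - of_nat N) / 12"
proof -
  let ?n = "of_nat N :: 'a"
  have index_weighted: "of_nat j * (\<Sum>w=1..N-1. z w ^ j / (z w - 1))
      = of_nat j * (?n + 1) / 2 - of_nat j ^ 2" if "j < N" for j
  proof (cases "j = 0")
    case False
    then have "1 \<le> j" by simp
    show ?thesis
      unfolding sum_power_div_minus_one[OF \<open>1 \<le> j\<close> that] by (simp add: field_simps power2_eq_square)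
  qed simp
  have "(\<Sum>w=1..N-1. (1 / (z w - 1)) ^ 2)
      = (\<Sum>w=1..N-1. 1 / (z w - 1) * ((\<Sum>j<N. of_nat j * z w ^ j) / ?n))"
  proof (rule sum.cong[OF refl])
    fix w assume "w \<in> {1..N-1}"
    then have "1 / (z w - 1) = (\<Sum>j<N. of_nat j * z w ^ j) / ?n"
      using N_ge_2 by (intro inverse_root_of_unity_minus_one z_neq_1 z_root) auto
    then show "(1 / (z w - 1)) ^ 2 = 1 / (z w - 1) * ((\<Sum>j<N. of_nat j * z w ^ j) / ?n)"
      by (metis power2_eq_square)
  qed
  also have "\<dots> = (\<Sum>j<N. of_nat j * (\<Sum>w=1..N-1. z w ^ j / (z w - 1))) / ?n"
    by (simp add: sum_divide_distrib sum_distrib_left algebra_simps) (rule sum.swap)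
  also have "\<dots> = (\<Sum>j<N. of_nat j * (?n + 1) / 2 - of_nat j ^ 2) / ?n"
    by (rule arg_cong[where f = "\<lambda>x. x / ?n"], rule sum.cong[OF refl], rule index_weighted) simp
  also have "\<dots> = ((?n + 1) / 2 * (\<Sum>j<N. of_nat j) - (\<Sum>j<N. of_nat j ^ 2)) / ?n"
    by (simp add: sum_subtractf sum_distrib_left sum_divide_distrib[symmetric] mult.commute)
  also have "\<dots> = (?n - 1) * (5 - ?n) / 12"
    unfolding sum_lessThan_of_nat sum_lessThan_squares using N_ge_2 by (simp add: field_simps)
  finally show ?thesis .
qed

lemma sum_cayley_squared:
  "(\<Sum>w=1..N-1. ((z w + 1) / (z w - 1)) ^ 2) = - (of_nat N - 1) * (of_nat N - 2) / 3"
proof -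
  have "((z w + 1) / (z w - 1)) ^ 2 = 1 + 4 * (1 / (z w - 1)) + 4 * (1 / (z w - 1)) ^ 2"
    if "w \<in> {1..N-1}" for w
  proof -
    have "z w - 1 \<noteq> 0" using z_neq_1[OF that] by simp
    then have "(z w + 1) / (z w - 1) = 1 + 2 * (1 / (z w - 1))" by (simp add: field_simps)
    then show ?thesis by (simp add: power2_eq_square algebra_simps)
  qed
  then have "(\<Sum>w=1..N-1. ((z w + 1) / (z w - 1)) ^ 2)
      = of_nat (N - 1) + 4 * (\<Sum>w=1..N-1. 1 / (z w - 1)) + 4 * (\<Sum>w=1..N-1. (1 / (z w - 1)) ^ 2)"
    by (simp add: sum.distrib sum_distrib_left)
  also have "\<dots> = - (of_nat N - 1) * (of_nat N - 2) / 3"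
    unfolding sum_inverse_minus_one sum_inverse_minus_one_squared
    using N_ge_2 by (simp add: of_nat_diff field_simps)
  finally show ?thesis .
qed

end

lemma cot_eq_exp:
  fixes z :: complex
  assumes "exp (2 * \<i> * z) \<noteq> 1"
  shows "cot z = \<i> * (exp (2 * \<i> * z) + 1) / (exp (2 * \<i> * z) - 1)"
proof -
  define a where "a = exp (\<i> * z)"
  have a2: "exp (2 * \<i> * z) = a * a" and "a \<noteq> 0"
    unfolding a_def by (simp_all flip: exp_add add: mult.assoc)
  have "cot z = ((a + inverse a) / 2) / ((a - inverse a) / (2 * \<i>))"
    unfolding cot_def sin_exp_eq cos_exp_eq a_def by (simp add: exp_minus)
  also have "\<dots> = \<i> * (a * a + 1) / (a * a - 1)"
    using \<open>a \<noteq> 0\<close> assms unfolding a2 by (simp add: field_simps)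
  finally show ?thesis unfolding a2 .
qed

lemma cot_pi_rational_eq_root_of_unity:
  assumes "n > 0" "\<not> n dvd k"
  defines "\<zeta> \<equiv> exp (2 * of_real pi * \<i> * of_nat k / of_nat n)"
  shows "complex_of_real (cot (pi * real k / real n)) = \<i> * (\<zeta> + 1) / (\<zeta> - 1)"
proof -
  have "n \<ge> 1" using assms(1) by simp
  have \<zeta>: "exp (2 * \<i> * complex_of_real (pi * real k / real n)) = \<zeta>"
    unfolding \<zeta>_def by (simp add: field_simps)
  have "\<zeta> \<noteq> 1" unfolding \<zeta>_def using complex_root_unity_eq_1[OF \<open>n \<ge> 1\<close>] assms(2) by simp
  then show ?thesis
    unfolding cot_of_real using cot_eq_exp[of "complex_of_real (pi * real k / real n)"] \<zeta> by simp
qed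

lemma sum_cot_squared_coprime:
  assumes "coprime N h" "N \<ge> 2"
  shows "(\<Sum>w=1..N-1. cot (pi * real h * real w / real N) ^ 2) = (real N - 1) * (real N - 2) / 3"
proof -
  define \<zeta> where "\<zeta> k = exp (2 * of_real pi * \<i> * of_nat k / of_nat N)" for k
  have \<zeta>_power: "\<zeta> k ^ m = \<zeta> (k * m)" for k m
    unfolding \<zeta>_def by (simp flip: exp_of_nat_mult add: field_simps)
  have \<zeta>_root: "\<zeta> k ^ N = 1" for k
    unfolding \<zeta>_def using assms(2) by (intro complex_root_unity) simp
  have not_dvd: "\<not> N dvd h * m" if "m \<in> {1..N-1}" for m
    using that coprime_dvd_mult_right_iff[OF assms(1)] by (auto dest: dvd_imp_le)
  have \<zeta>_neq_1: "\<zeta> (h * m) \<noteq> 1" if "m \<in> {1..N-1}" for m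
    unfolding \<zeta>_def using complex_root_unity_eq_1[of N "h * m"] not_dvd[OF that] assms(2) by simp
  have power_sum: "(\<Sum>w=1..N-1. \<zeta> (h * w) ^ m) = -1" if "1 \<le> m" "m < N" for m
  proof -
    have "(\<Sum>w=1..N-1. \<zeta> (h * w) ^ m) = (\<Sum>w=1..N-1. \<zeta> (h * m) ^ w)"
      by (simp add: \<zeta>_power mult.commute mult.left_commute)
    also have "\<dots> = -1"
      using that \<zeta>_neq_1[of m] \<zeta>_root[of "h * m"] by (intro sum_power_root_of_unity) auto
    finally show ?thesis .
  qed
  have cot_eq: "complex_of_real (cot (pi * real h * real w / real N)) = \<i> * (\<zeta> (h * w) + 1) / (\<zeta> (h * w) - 1)"
    if "w \<in> {1..N-1}" for w
    using cot_pi_rational_eq_root_of_unity[OF _ not_dvd[OF that]] assms(2)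
    unfolding \<zeta>_def by (simp add: mult.assoc)
  have "complex_of_real (\<Sum>w=1..N-1. cot (pi * real h * real w / real N) ^ 2)
      = - (\<Sum>w=1..N-1. ((\<zeta> (h * w) + 1) / (\<zeta> (h * w) - 1)) ^ 2)"
    unfolding of_real_sum of_real_power sum_negf[symmetric]
    by (rule sum.cong[OF refl]) (simp add: cot_eq power_mult_distrib power_divide)
  also have "\<dots> = (of_nat N - 1) * (of_nat N - 2) / 3"
    using sum_cayley_squared[of N "\<lambda>w. \<zeta> (h * w)", OF assms(2) \<zeta>_neq_1 \<zeta>_root power_sum] by (simp add: algebra_simps)
  also have "\<dots> = complex_of_real ((real N - 1) * (real N - 2) / 3)"
    by simp
  finally show ?thesis by (simp only: of_real_eq_iff)
qed

lemma harm_ord_nonneg: "harm_ord n a \<ge> 0"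
  unfolding harm_ord_def by (rule sum_nonneg) simp

lemma harm_ord_2_eq: "harm_ord n 2 = (\<Sum>h=1..n. 1 / real h ^ 2)"
  unfolding harm_ord_def by (rule sum.cong) (auto simp: powr_minus_divide)

lemma harm_ord_2_le: "harm_ord n 2 \<le> pi ^ 2 / 6"
proof -
  have sums: "(\<lambda>k. 1 / (real k + 1) ^ 2) sums (pi ^ 2 / 6)"
    using inverse_squares_sums by (simp add: add.commute)
  have "harm_ord n 2 = (\<Sum>k<n. 1 / (real k + 1) ^ 2)"
    unfolding harm_ord_2_eq by (simp add: sum.atLeast1_atMost_eq add.commute)
  also have "\<dots> \<le> (\<Sum>k. 1 / (real k + 1) ^ 2)"
    by (rule sum_le_suminf) (use sums in \<open>auto simp: sums_iff\<close>)
  also have "\<dots> = pi ^ 2 / 6"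
    using sums by (simp add: sums_iff)
  finally show ?thesis .
qed

lemma double_sum_cot_squared_prime:
  assumes "prime N"
  shows "(\<Sum>w=1..N-1. \<Sum>h=1..N-1. cot (pi * real h * real w / real N) ^ 2 / real h ^ 2)
    = (real N - 1) * (real N - 2) / 3 * harm_ord (N - 1) 2"
proof -
  have "N \<ge> 2" using assms by (rule prime_ge_2_nat)
  have coprime: "coprime N h" if "h \<in> {1..N-1}" for h
    using assms that by (intro prime_imp_coprime) (auto dest: dvd_imp_le)
  have "(\<Sum>w=1..N-1. cot (pi * real h * real w / real N) ^ 2) / real h ^ 2
      = (real N - 1) * (real N - 2) / 3 * (1 / real h ^ 2)" if "h \<in> {1..N-1}" for h
    unfolding sum_cot_squared_coprime[OF coprime[OF that] \<open>N \<ge> 2\<close>] by simp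
  then have "(\<Sum>h=1..N-1. (\<Sum>w=1..N-1. cot (pi * real h * real w / real N) ^ 2) / real h ^ 2)
      = (real N - 1) * (real N - 2) / 3 * harm_ord (N - 1) 2"
    unfolding harm_ord_2_eq sum_distrib_left by (rule sum.cong[OF refl])
  then show ?thesis
    by (subst sum.swap) (simp add: sum_divide_distrib)
qed

theorem lemma3:
  fixes N :: nat
  assumes "prime N" and "N \<ge> 3"
  shows "(1 / (real N - 1)) * (\<Sum>w=1..N-1. (1 / real N ^ 2) *
            (\<Sum>h=1..N-1. cot (pi * real h * real w / real N) ^ 2 / real h ^ 2))
           = (real N - 2) / (3 * real N ^ 2) * harm_ord (N - 1) 2
       \<and> (real N - 2) / (3 * real N ^ 2) * harm_ord (N - 1) 2 \<le> pi ^ 2 / (18 * real N)"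
proof
  have N: "real N \<ge> 3" using assms(2) by simp
  show "(1 / (real N - 1)) * (\<Sum>w=1..N-1. (1 / real N ^ 2) *
            (\<Sum>h=1..N-1. cot (pi * real h * real w / real N) ^ 2 / real h ^ 2))
           = (real N - 2) / (3 * real N ^ 2) * harm_ord (N - 1) 2"
    using N unfolding sum_distrib_left[symmetric] double_sum_cot_squared_prime[OF assms(1)]
    by (simp add: field_simps)
  have "(real N - 2) * harm_ord (N - 1) 2 \<le> real N * (pi ^ 2 / 6)"
    using N harm_ord_nonneg[of "N - 1" 2] harm_ord_2_le[of "N - 1"]
    by (intro mult_mono) auto
  then have "(real N - 2) * harm_ord (N - 1) 2 / (3 * real N ^ 2) \<le> real N * (pi ^ 2 / 6) / (3 * real N ^ 2)"
    by (intro divide_right_mono) auto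
  also have "\<dots> = pi ^ 2 / (18 * real N)"
    using N by (simp add: power2_eq_square)
  finally show "(real N - 2) / (3 * real N ^ 2) * harm_ord (N - 1) 2 \<le> pi ^ 2 / (18 * real N)"
    by simp
qed

end
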